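(* Let $\bar Z=\frac{1}{\sqrt2}\big(\frac{\partial}{\partial\bar w}-iw\frac{\partial}{\partial s}\big)$ on $\mathbb{C}\times\mathbb{R}\ni(w,s)$. If $p(w,\bar w,s)$ is a homogeneous polynomial of degree $k\ge2$, then there exists a homogeneous polynomial $q(w,\bar w,s)$ of degree $k+1$ such that $\bar Zq=p$ and $|\mathrm{Re}\,q(w,\bar w,s)|\le C|w|^2(|w|+|s|)$ for $|w|+|s|^{1/2}\le1$. Furthermore, the coefficients of $q$ are linear combinations of the coefficients of $p$.
   Context: A polynomial in $w,\bar w,s$ is homogeneous of degree $k$ if it is a linear combination of monomials $\bar w^\alpha w^\beta s^\gamma$ with $\alpha+\beta+2\gamma=k$. *)

theory Defs
  imports Complex_Main
begin

text \<open>A polynomial in w, conj w, s (complex coefficients) is represented by its coefficient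
  function c, where c a b g is the coefficient of the monomial (conj w)^a * w^b * s^g.\<close>

type_synonym cpoly = "nat \<Rightarrow> nat \<Rightarrow> nat \<Rightarrow> complex"

definition homog :: "nat \<Rightarrow> cpoly \<Rightarrow> bool" where
  "homog k c \<longleftrightarrow> (\<forall>a b g. c a b g \<noteq> 0 \<longrightarrow> a + b + 2 * g = k)"

text \<open>Evaluation of a polynomial all of whose monomials have exponents at most n
  (in particular of a homogeneous polynomial of degree n) at (w, s) in C x R.\<close>
definition peval :: "nat \<Rightarrow> cpoly \<Rightarrow> complex \<Rightarrow> real \<Rightarrow> complex" where
  "peval n c w s = (\<Sum>a\<le>n. \<Sum>b\<le>n. \<Sum>g\<le>n. c a b g * cnj w ^ a * w ^ b * complex_of_real s ^ g)"

text \<open>The operator Zbar = (1/sqrt 2)(d/d(conj w) - i w d/ds) acting on polynomials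
  (coefficientwise): d/d(conj w) sends (conj w)^(a+1) w^b s^g to (a+1) (conj w)^a w^b s^g, and
  -i w d/ds sends (conj w)^a w^(b-1) s^(g+1) to -i (g+1) (conj w)^a w^b s^g.\<close>
definition Zbar :: "cpoly \<Rightarrow> cpoly" where
  "Zbar c = (\<lambda>a b g. (of_nat (a + 1) * c (a + 1) b g
      - (if b \<ge> 1 then \<i> * of_nat (g + 1) * c a (b - 1) (g + 1) else 0))
      / complex_of_real (sqrt 2))"

end

theory Submission
  imports Defs
begin

text \<open>Writing q for the coefficients of the solution, the equation Zbar q = p reads
  (a+1) q(a+1,b,g) = sqrt 2 p(a,b,g) + i (g+1) q(a,b-1,g+1), which determines q recursively in
  the exponent a of conj w once the coefficients q(0,b,g) are fixed; these may be chosen freely.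
  Since a+b+2g = k+1 \<ge> 3, every monomial of q other than s^g, w s^g and conj w s^g is
  O(|w|^2 (|w| + |s|)) on |w| + |s|^(1/2) \<le> 1.  We take q(0,0,g) = 0 and
  q(0,1,g) = - conj q(1,0,g), which makes the sum of the remaining two monomials purely
  imaginary.  Because of this conjugation the solution operator is only real-linear.\<close>

fun Zbar_inv :: "nat \<Rightarrow> cpoly \<Rightarrow> cpoly" where
  "Zbar_inv k p 0 b g =
     (if b = 1 \<and> 2 * g = k then - cnj (complex_of_real (sqrt 2) * p 0 0 g) else 0)"
| "Zbar_inv k p (Suc a) b g =
     (complex_of_real (sqrt 2) * p a b g
      + (if b \<ge> 1 then \<i> * of_nat (g + 1) * Zbar_inv k p a (b - 1) (g + 1) else 0))
     / of_nat (a + 1)"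

lemma Zbar_inv_add:
  "Zbar_inv k (\<lambda>a b g. p a b g + q a b g) a b g = Zbar_inv k p a b g + Zbar_inv k q a b g"
  by (induction a arbitrary: b g) (auto simp: algebra_simps add_divide_distrib)

lemma Zbar_inv_scale_real:
  "Zbar_inv k (\<lambda>a b g. complex_of_real r * p a b g) a b g = complex_of_real r * Zbar_inv k p a b g"
  by (induction a arbitrary: b g) (auto simp: algebra_simps)

lemma homog_Zbar_inv:
  assumes "homog k p"
  shows "homog (k + 1) (Zbar_inv k p)"
  unfolding homog_def
proof (intro allI impI)
  fix a b g
  show "Zbar_inv k p a b g \<noteq> 0 \<Longrightarrow> a + b + 2 * g = k + 1"
  proof (induction a arbitrary: b g)
    case 0
    then show ?case by (auto split: if_splits)
  next
    case (Suc a)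
    show ?case
    proof (cases "p a b g = 0")
      case True
      with Suc.prems have "b \<ge> 1" "Zbar_inv k p a (b - 1) (g + 1) \<noteq> 0"
        by (auto split: if_splits)
      with Suc.IH show ?thesis by fastforce
    next
      case False
      with assms show ?thesis unfolding homog_def by auto
    qed
  qed
qed

lemma Zbar_Zbar_inv: "Zbar (Zbar_inv k p) = p"
proof (intro ext)
  fix a b g
  have "(of_nat (a + 1) :: complex) \<noteq> 0"
    by (metis of_nat_eq_0_iff add_eq_0_iff_both_eq_0 one_neq_zero)
  then show "Zbar (Zbar_inv k p) a b g = p a b g"
    unfolding Zbar_def by (simp del: of_nat_Suc of_nat_add)
qed

lemma Zbar_inv_0_1:
  assumes "homog k p"
  shows "Zbar_inv k p 0 1 g = - cnj (Zbar_inv k p 1 0 g)"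
proof (cases "2 * g = k")
  case False
  with assms have "p 0 0 g = 0" unfolding homog_def by fastforce
  with False show ?thesis by simp
qed simp

lemma power_mult_power_le_sq_mult_add:
  fixes x y :: real
  assumes "0 \<le> x" "x \<le> 1" "0 \<le> y" "y \<le> 1" "2 \<le> i" "3 \<le> i + 2 * g"
  shows "x ^ i * y ^ g \<le> x\<^sup>2 * (x + y)"
proof -
  have "x ^ (i - 2) * y ^ g \<le> x + y"
  proof (cases "i \<ge> 3")
    case True
    then have "x ^ (i - 2) \<le> x ^ 1" using assms by (intro power_decreasing) auto
    moreover have "y ^ g \<le> 1" using assms by (simp add: power_le_one)
    ultimately have "x ^ (i - 2) * y ^ g \<le> x * 1"
      using assms by (intro mult_mono) auto
    then show ?thesis using assms by linarith
  next
    case False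
    then have "i = 2" "g \<ge> 1" using assms by auto
    then have "y ^ g \<le> y ^ 1" using assms by (intro power_decreasing) auto
    with \<open>i = 2\<close> show ?thesis using assms by simp
  qed
  then have "x\<^sup>2 * (x ^ (i - 2) * y ^ g) \<le> x\<^sup>2 * (x + y)"
    by (simp add: mult_left_mono)
  moreover have "x ^ i = x\<^sup>2 * x ^ (i - 2)"
    using \<open>2 \<le> i\<close> by (metis le_add_diff_inverse power_add)
  ultimately show ?thesis by (simp add: mult.assoc)
qed

definition monomial_term :: "cpoly \<Rightarrow> complex \<Rightarrow> real \<Rightarrow> nat \<Rightarrow> nat \<Rightarrow> nat \<Rightarrow> complex" where
  "monomial_term c w s a b g = c a b g * cnj w ^ a * w ^ b * complex_of_real s ^ g"

lemma norm_monomial_term_le: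
  assumes "homog n c" "3 \<le> n" "2 \<le> a + b" "cmod w \<le> 1" "\<bar>s\<bar> \<le> 1"
  shows "cmod (monomial_term c w s a b g) \<le> cmod (c a b g) * ((cmod w)\<^sup>2 * (cmod w + \<bar>s\<bar>))"
proof (cases "c a b g = 0")
  case False
  with assms have "a + b + 2 * g = n" unfolding homog_def by blast
  have "cmod (monomial_term c w s a b g) = cmod (c a b g) * (cmod w ^ (a + b) * \<bar>s\<bar> ^ g)"
    unfolding monomial_term_def by (simp add: norm_mult norm_power power_add)
  also have "\<dots> \<le> cmod (c a b g) * ((cmod w)\<^sup>2 * (cmod w + \<bar>s\<bar>))"
    using assms \<open>a + b + 2 * g = n\<close>
    by (intro mult_left_mono power_mult_power_le_sq_mult_add) auto
  finally show ?thesis .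
qed (simp add: monomial_term_def)

lemma Re_linear_monomial_terms:
  assumes "c 0 0 g = 0" "c 0 1 g = - cnj (c 1 0 g)"
  shows "Re (monomial_term c w s 0 0 g + monomial_term c w s 0 1 g + monomial_term c w s 1 0 g) = 0"
proof -
  have "monomial_term c w s 0 0 g + monomial_term c w s 0 1 g + monomial_term c w s 1 0 g
      = complex_of_real (s ^ g) * (c 1 0 g * cnj w - cnj (c 1 0 g * cnj w))"
    unfolding monomial_term_def assms by (simp add: algebra_simps)
  then show ?thesis by simp
qed

lemma peval_split_linear_terms:
  assumes "1 \<le> n"
  defines "S \<equiv> {..n} \<times> {..n} - {(0, 0), (0, 1), (1, 0)}"
  shows "peval n c w s =
    (\<Sum>g\<le>n. monomial_term c w s 0 0 g + monomial_term c w s 0 1 g + monomial_term c w s 1 0 g)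
    + (\<Sum>(a, b)\<in>S. \<Sum>g\<le>n. monomial_term c w s a b g)"
proof -
  let ?F = "\<lambda>a b. \<Sum>g\<le>n. monomial_term c w s a b g"
  have "peval n c w s = (\<Sum>(a, b)\<in>{..n} \<times> {..n}. ?F a b)"
    unfolding sum.cartesian_product[symmetric] by (simp add: peval_def monomial_term_def)
  also have "\<dots> = (\<Sum>(a, b)\<in>S. ?F a b) + (\<Sum>(a, b)\<in>{(0, 0), (0, 1), (1, 0)}. ?F a b)"
    unfolding S_def using assms by (intro sum.subset_diff) auto
  also have "(\<Sum>(a, b)\<in>{(0, 0), (0, 1), (1, 0)}. ?F a b) = ?F 0 0 + ?F 0 1 + ?F 1 0"
    by (simp add: add.assoc)
  finally show ?thesis by (simp add: sum.distrib add.commute)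
qed

lemma abs_Re_peval_le:
  assumes "homog n c" "3 \<le> n"
    and "\<And>g. c 0 0 g = 0" "\<And>g. c 0 1 g = - cnj (c 1 0 g)"
  shows "\<exists>C. \<forall>w s. cmod w + sqrt \<bar>s\<bar> \<le> 1 \<longrightarrow>
           \<bar>Re (peval n c w s)\<bar> \<le> C * (cmod w)\<^sup>2 * (cmod w + \<bar>s\<bar>)"
proof (intro exI allI impI)
  define S where "S = {..n} \<times> {..n} - {(0::nat, 0::nat), (0, 1), (1, 0)}"
  fix w s
  assume "cmod w + sqrt \<bar>s\<bar> \<le> 1"
  then have "cmod w \<le> 1" "sqrt \<bar>s\<bar> \<le> 1"
    using norm_ge_zero[of w] real_sqrt_ge_zero[of "\<bar>s\<bar>"] by linarith+
  then have "\<bar>s\<bar> \<le> 1" by simp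
  have "Re (peval n c w s) = Re (\<Sum>(a, b)\<in>S. \<Sum>g\<le>n. monomial_term c w s a b g)"
    using peval_split_linear_terms[of n c w s] assms Re_linear_monomial_terms
    unfolding S_def by (simp add: Re_sum)
  also have "\<bar>\<dots>\<bar> \<le> (\<Sum>(a, b)\<in>S. \<Sum>g\<le>n. cmod (monomial_term c w s a b g))"
    by (rule order_trans[OF abs_Re_le_cmod]) (auto intro!: order_trans[OF norm_sum] sum_mono)
  also have "\<dots> \<le> (\<Sum>(a, b)\<in>S. \<Sum>g\<le>n. cmod (c a b g) * ((cmod w)\<^sup>2 * (cmod w + \<bar>s\<bar>)))"
  proof (rule sum_mono, clarify)
    fix a b
    assume "(a, b) \<in> S"
    then have "2 \<le> a + b" by (auto simp: S_def)
    with assms \<open>cmod w \<le> 1\<close> \<open>\<bar>s\<bar> \<le> 1\<close>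
    show "(\<Sum>g\<le>n. cmod (monomial_term c w s a b g))
        \<le> (\<Sum>g\<le>n. cmod (c a b g) * ((cmod w)\<^sup>2 * (cmod w + \<bar>s\<bar>)))"
      by (intro sum_mono norm_monomial_term_le) auto
  qed
  also have "\<dots> = (\<Sum>(a, b)\<in>S. \<Sum>g\<le>n. cmod (c a b g)) * (cmod w)\<^sup>2 * (cmod w + \<bar>s\<bar>)"
    by (simp add: sum_distrib_right case_prod_unfold mult.assoc)
  finally show "\<bar>Re (peval n c w s)\<bar> \<le> (\<Sum>(a, b)\<in>S. \<Sum>g\<le>n. cmod (c a b g)) * (cmod w)\<^sup>2 * (cmod w + \<bar>s\<bar>)" .
qed

theorem lemma8p3:
  fixes k :: nat
  assumes "k \<ge> 2"
  shows "\<exists>L :: cpoly \<Rightarrow> cpoly.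
    (\<forall>p q. L (\<lambda>a b g. p a b g + q a b g) = (\<lambda>a b g. L p a b g + L q a b g)) \<and>
    (\<forall>(r::real) p. L (\<lambda>a b g. complex_of_real r * p a b g)
                    = (\<lambda>a b g. complex_of_real r * L p a b g)) \<and>
    (\<forall>p. homog k p \<longrightarrow>
       homog (k + 1) (L p) \<and> Zbar (L p) = p \<and>
       (\<exists>C::real. \<forall>(w::complex) (s::real). cmod w + sqrt \<bar>s\<bar> \<le> 1 \<longrightarrow>
          \<bar>Re (peval (k + 1) (L p) w s)\<bar> \<le> C * (cmod w)\<^sup>2 * (cmod w + \<bar>s\<bar>)))"
proof (intro exI[of _ "Zbar_inv k"] conjI allI impI)
  fix p assume "homog k p"
  then show "homog (k + 1) (Zbar_inv k p)" by (rule homog_Zbar_inv)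
  show "\<exists>C::real. \<forall>w s. cmod w + sqrt \<bar>s\<bar> \<le> 1 \<longrightarrow>
          \<bar>Re (peval (k + 1) (Zbar_inv k p) w s)\<bar> \<le> C * (cmod w)\<^sup>2 * (cmod w + \<bar>s\<bar>)"
    using assms \<open>homog k p\<close> by (intro abs_Re_peval_le homog_Zbar_inv Zbar_inv_0_1) auto
qed (auto intro!: ext simp: Zbar_inv_add Zbar_inv_scale_real Zbar_Zbar_inv)

end
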